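(* Let $n\ge 3$ and $a<b<c$ be elements of $\mathcal{C}_n=\{0,1,\dots,n-1\}$. Let $\triangle=\triangle^{(n)}\{a,b,c\}$, let $\mathcal{IT}=\{\alpha\in\triangle:\ \alpha(a)=a,\ \alpha(c)=c\}$ be the idempotent triangle, let $\mathcal{RI}$ be the set of right identities of $\triangle$, and let $Id\left(\mathcal{STR}^{(n)}\{a,c\}\right)=\{a_kc_{n-k}:\ a+1\le k\le c\}$. Then: (i) $\mathcal{RI}$ is a subsemiring of $\mathcal{IT}$ with exactly $(b-a)(c-b)$ elements; (ii) $\mathcal{IT}\setminus\mathcal{RI}$ is a subsemiring of $\mathcal{IT}$ with exactly $\frac12\left((c-b)^2+(b-a)^2+c-a\right)$ elements; (iii) both $Id\left(\mathcal{STR}^{(n)}\{a,c\}\right)$ and $\mathcal{IT}\setminus\mathcal{RI}$ are ideals of the semiring $\mathcal{IT}$.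
   Context: $\mathcal{C}_n=\{0,1,\dots,n-1\}$ is the chain with its usual order, regarded as a join-semilattice with $x\vee y=\max(x,y)$. $\widehat{\mathcal{E}}_{\mathcal{C}_n}$ denotes the set of all endomorphisms of $(\mathcal{C}_n,\vee)$, i.e. all order-preserving maps $\alpha:\mathcal{C}_n\to\mathcal{C}_n$ (it is not required that $\alpha(0)=0$). It is a semiring with addition $(\alpha+\beta)(x)=\max(\alpha(x),\beta(x))$ and multiplication written "first $\alpha$, then $\beta$": $(\alpha\cdot\beta)(x)=\beta(\alpha(x))$. For $x_1<\dots<x_r$ in $\mathcal{C}_n$ and nonnegative integers $k_1,\dots,k_r$ with $k_1+\dots+k_r=n$, the notation $(x_1)_{k_1}(x_2)_{k_2}\cdots(x_r)_{k_r}$ denotes the map sending the first $k_1$ elements $0,\dots,k_1-1$ to $x_1$, the next $k_2$ elements to $x_2$, and so on; a subscript $1$ may be omitted and a factor with subscript $0$ omitted. $\overline{x}$ denotes the constant map with value $x$. The triangle $\triangle^{(n)}\{a,b,c\}$ is the set of all $\alpha\in\widehat{\mathcal{E}}_{\mathcal{C}_n}$ with image contained in $\{a,b,c\}$ (a subsemiring). A right identity of $\triangle$ is an element $e\in\triangle$ with $\alpha\cdot e=\alpha$ for all $\alpha\in\triangle$. A subsemiring is a nonempty subset closed under $+$ and $\cdot$; an ideal $I$ of a semiring $R$ is a nonempty subset with $I+I\subseteq I$, $RI\subseteq I$, $IR\subseteq I$. *)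

theory Defs
  imports "HOL-Library.FuncSet"
begin

text \<open>The chain C_n = {0..<n}; endomorphisms of (C_n, max) are the order-preserving
  self-maps of {0..<n}, represented as extensional functions (undefined outside {0..<n}).\<close>

definition chain :: "nat \<Rightarrow> nat set" where
  "chain n = {0..<n}"

definition endo :: "nat \<Rightarrow> (nat \<Rightarrow> nat) set" where
  "endo n = {\<alpha> \<in> chain n \<rightarrow>\<^sub>E chain n. mono_on (chain n) \<alpha>}"

definition eplus :: "nat \<Rightarrow> (nat \<Rightarrow> nat) \<Rightarrow> (nat \<Rightarrow> nat) \<Rightarrow> (nat \<Rightarrow> nat)" where
  "eplus n \<alpha> \<beta> = (\<lambda>x\<in>chain n. max (\<alpha> x) (\<beta> x))"

definition emult :: "nat \<Rightarrow> (nat \<Rightarrow> nat) \<Rightarrow> (nat \<Rightarrow> nat) \<Rightarrow> (nat \<Rightarrow> nat)" where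
  "emult n \<alpha> \<beta> = (\<lambda>x\<in>chain n. \<beta> (\<alpha> x))"

definition triangle :: "nat \<Rightarrow> nat \<Rightarrow> nat \<Rightarrow> nat \<Rightarrow> (nat \<Rightarrow> nat) set" where
  "triangle n a b c = {\<alpha> \<in> endo n. \<alpha> ` chain n \<subseteq> {a, b, c}}"

definition idem_triangle :: "nat \<Rightarrow> nat \<Rightarrow> nat \<Rightarrow> nat \<Rightarrow> (nat \<Rightarrow> nat) set" where
  "idem_triangle n a b c = {\<alpha> \<in> triangle n a b c. \<alpha> a = a \<and> \<alpha> c = c}"

definition right_identities :: "nat \<Rightarrow> (nat \<Rightarrow> nat) set \<Rightarrow> (nat \<Rightarrow> nat) set" where
  "right_identities n T = {e \<in> T. \<forall>\<alpha>\<in>T. emult n \<alpha> e = \<alpha>}"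

definition step_map :: "nat \<Rightarrow> nat \<Rightarrow> nat \<Rightarrow> nat \<Rightarrow> (nat \<Rightarrow> nat)" where
  "step_map n a c k = (\<lambda>x\<in>chain n. if x < k then a else c)"

definition Id_STR :: "nat \<Rightarrow> nat \<Rightarrow> nat \<Rightarrow> (nat \<Rightarrow> nat) set" where
  "Id_STR n a c = {step_map n a c k | k. a + 1 \<le> k \<and> k \<le> c}"

definition is_subsemiring :: "nat \<Rightarrow> (nat \<Rightarrow> nat) set \<Rightarrow> (nat \<Rightarrow> nat) set \<Rightarrow> bool" where
  "is_subsemiring n S R \<longleftrightarrow> S \<noteq> {} \<and> S \<subseteq> R \<and>
     (\<forall>x\<in>S. \<forall>y\<in>S. eplus n x y \<in> S \<and> emult n x y \<in> S)"

definition is_ideal :: "nat \<Rightarrow> (nat \<Rightarrow> nat) set \<Rightarrow> (nat \<Rightarrow> nat) set \<Rightarrow> bool" where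
  "is_ideal n I R \<longleftrightarrow> I \<noteq> {} \<and> I \<subseteq> R \<and>
     (\<forall>x\<in>I. \<forall>y\<in>I. eplus n x y \<in> I) \<and>
     (\<forall>r\<in>R. \<forall>x\<in>I. emult n r x \<in> I \<and> emult n x r \<in> I)"

end

theory Submission
  imports Defs
begin

text \<open>Every element of the idempotent triangle is a three-step map \<open>a\<^sub>k b\<^sub>l\<^sub>-\<^sub>k c\<^sub>n\<^sub>-\<^sub>l\<close>
  with \<open>a < k \<le> l \<le> c\<close>, and it is recovered from its sublevel sets
  \<open>{x. \<alpha> x < b} = {..<k}\<close> and \<open>{x. \<alpha> x < c} = {..<l}\<close>; so the idempotent triangle is in
  bijection with these pairs \<open>(k, l)\<close>.  Its right identities are exactly the maps fixing \<open>b\<close>,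
  i.e. the pairs with \<open>k \<le> b < l\<close>, which gives \<open>(b - a)(c - b)\<close> of them; the remaining pairs lie
  entirely in \<open>(a, b]\<close> or entirely in \<open>(b, c]\<close>, which gives the two triangular numbers.
  Since every map in the triangle fixes \<open>a\<close> and \<open>c\<close>, the conditions "\<open>\<alpha> b \<in> {a, c}\<close>" and
  "\<open>b\<close> is not a value of \<open>\<alpha>\<close>" are preserved by maxima and by composition with arbitrary
  elements on either side, which yields the ideals.\<close>

lemma eplus_apply [simp]: "x \<in> chain n \<Longrightarrow> eplus n \<alpha> \<beta> x = max (\<alpha> x) (\<beta> x)"
  by (simp add: eplus_def)

lemma emult_apply [simp]: "x \<in> chain n \<Longrightarrow> emult n \<alpha> \<beta> x = \<beta> (\<alpha> x)"
  by (simp add: emult_def)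

lemma endoD:
  assumes "\<alpha> \<in> endo n"
  shows "\<And>x. x \<in> chain n \<Longrightarrow> \<alpha> x \<in> chain n"
    and "\<And>x y. x \<in> chain n \<Longrightarrow> y \<in> chain n \<Longrightarrow> x \<le> y \<Longrightarrow> \<alpha> x \<le> \<alpha> y"
  using assms by (auto simp: endo_def dest: mono_onD)

lemma eplus_in_endo:
  assumes "\<alpha> \<in> endo n" "\<beta> \<in> endo n"
  shows "eplus n \<alpha> \<beta> \<in> endo n"
proof -
  have "max (\<alpha> x) (\<beta> x) \<le> max (\<alpha> y) (\<beta> y)"
    if "x \<in> chain n" "y \<in> chain n" "x \<le> y" for x y
    using endoD(2)[OF assms(1) that] endoD(2)[OF assms(2) that] by (rule max.mono)
  then show ?thesis
    using endoD(1)[OF assms(1)] endoD(1)[OF assms(2)]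
    by (auto simp: endo_def eplus_def max_def intro!: mono_onI)
qed

lemma emult_in_endo:
  assumes "\<alpha> \<in> endo n" "\<beta> \<in> endo n"
  shows "emult n \<alpha> \<beta> \<in> endo n"
  using endoD[OF assms(1)] endoD[OF assms(2)]
  by (auto simp: endo_def emult_def intro!: mono_onI)

lemma eplus_in_triangle:
  "\<alpha> \<in> triangle n a b c \<Longrightarrow> \<beta> \<in> triangle n a b c \<Longrightarrow> eplus n \<alpha> \<beta> \<in> triangle n a b c"
  by (auto simp: triangle_def eplus_in_endo max_def)

lemma emult_in_triangle:
  "\<alpha> \<in> triangle n a b c \<Longrightarrow> \<beta> \<in> triangle n a b c \<Longrightarrow> emult n \<alpha> \<beta> \<in> triangle n a b c"
  by (auto simp: triangle_def emult_in_endo dest: endoD(1))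

lemma idem_triangleD:
  assumes "\<alpha> \<in> idem_triangle n a b c"
  shows "\<alpha> \<in> triangle n a b c" "\<alpha> a = a" "\<alpha> c = c"
    and "\<And>x. x \<in> chain n \<Longrightarrow> \<alpha> x \<in> {a, b, c}"
  using assms by (auto simp: idem_triangle_def triangle_def)

lemma eplus_in_idem_triangle:
  assumes "\<alpha> \<in> idem_triangle n a b c" "\<beta> \<in> idem_triangle n a b c" "a < n" "c < n"
  shows "eplus n \<alpha> \<beta> \<in> idem_triangle n a b c"
  using assms by (auto simp: idem_triangle_def chain_def eplus_in_triangle)

lemma emult_in_idem_triangle:
  assumes "\<alpha> \<in> idem_triangle n a b c" "\<beta> \<in> idem_triangle n a b c" "a < n" "c < n"
  shows "emult n \<alpha> \<beta> \<in> idem_triangle n a b c"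
  using assms by (auto simp: idem_triangle_def chain_def emult_in_triangle)

lemma downward_closed_eq_lessThan_card:
  fixes S :: "nat set"
  assumes "finite S" and down: "\<And>x y. x \<in> S \<Longrightarrow> y \<le> x \<Longrightarrow> y \<in> S"
  shows "S = {..<card S}"
proof (cases "S = {}")
  case False
  have "S = {..Max S}"
    using Max_ge[OF \<open>finite S\<close>] down[OF Max_in[OF \<open>finite S\<close> False]] by auto
  then show ?thesis
    by (metis card_atMost lessThan_Suc_atMost)
qed simp

lemma mono_on_chain_sublevel:
  fixes \<alpha> :: "nat \<Rightarrow> 'a::linorder"
  assumes "mono_on (chain n) \<alpha>"
  shows "{x \<in> chain n. \<alpha> x < v} = {..<card {x \<in> chain n. \<alpha> x < v}}"
proof (rule downward_closed_eq_lessThan_card)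
  show "finite {x \<in> chain n. \<alpha> x < v}"
    by (simp add: chain_def)
  fix x y assume "x \<in> {x \<in> chain n. \<alpha> x < v}" "y \<le> x"
  then show "y \<in> {x \<in> chain n. \<alpha> x < v}"
    using mono_onD[OF assms, of y x] by (auto simp: chain_def)
qed

definition step_map3 :: "nat \<Rightarrow> nat \<Rightarrow> nat \<Rightarrow> nat \<Rightarrow> nat \<Rightarrow> nat \<Rightarrow> (nat \<Rightarrow> nat)" where
  "step_map3 n a b c k l = (\<lambda>x\<in>chain n. if x < k then a else if x < l then b else c)"

lemma step_map_eq_step_map3: "step_map n a c k = step_map3 n a b c k k"
  by (auto simp: step_map_def step_map3_def)

lemma step_map3_in_idem_triangle:
  assumes "a \<le> b" "b \<le> c" "a < k" "k \<le> l" "l \<le> c" "c < n"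
  shows "step_map3 n a b c k l \<in> idem_triangle n a b c"
  using assms
  by (auto simp: idem_triangle_def triangle_def endo_def step_map3_def chain_def
      intro!: mono_onI)

lemma step_map3_sublevels:
  assumes "a < b" "b < c" "k \<le> l" "l \<le> n"
  shows "{x \<in> chain n. step_map3 n a b c k l x < b} = {..<k}"
    and "{x \<in> chain n. step_map3 n a b c k l x < c} = {..<l}"
  using assms by (auto simp: step_map3_def chain_def)

lemma inj_on_step_map3:
  assumes "a < b" "b < c"
  shows "inj_on (\<lambda>(k, l). step_map3 n a b c k l) {(k, l). k \<le> l \<and> l \<le> n}"
proof (rule inj_onI, clarify)
  fix k l k' l'
  assume "k \<le> l" "l \<le> n" "k' \<le> l'" "l' \<le> n"
    and "step_map3 n a b c k l = step_map3 n a b c k' l'"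
  then show "k = k' \<and> l = l'"
    using step_map3_sublevels[OF assms, of k l n] step_map3_sublevels[OF assms, of k' l' n]
    by (simp add: lessThan_eq_iff)
qed

lemma idem_triangle_obtains_step_map3:
  assumes \<alpha>: "\<alpha> \<in> idem_triangle n a b c" and "a < b" "b < c" "c < n"
  obtains k l where "a < k" "k \<le> l" "l \<le> c" "\<alpha> = step_map3 n a b c k l"
proof -
  have endo: "\<alpha> \<in> chain n \<rightarrow>\<^sub>E chain n" "mono_on (chain n) \<alpha>"
    using idem_triangleD(1)[OF \<alpha>] by (auto simp: triangle_def endo_def)
  define k where "k = card {x \<in> chain n. \<alpha> x < b}"
  define l where "l = card {x \<in> chain n. \<alpha> x < c}"
  have below_b: "{x \<in> chain n. \<alpha> x < b} = {..<k}"
    unfolding k_def by (rule mono_on_chain_sublevel[OF endo(2)])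
  have below_c: "{x \<in> chain n. \<alpha> x < c} = {..<l}"
    unfolding l_def by (rule mono_on_chain_sublevel[OF endo(2)])
  have "a \<in> {..<k}"
    unfolding below_b[symmetric] using idem_triangleD(2)[OF \<alpha>] assms(2-4) by (simp add: chain_def)
  moreover have "{..<k} \<subseteq> {..<l}"
    unfolding below_b[symmetric] below_c[symmetric] using assms(3) by auto
  moreover have "c \<notin> {..<l}"
    unfolding below_c[symmetric] using idem_triangleD(3)[OF \<alpha>] by simp
  moreover have "\<alpha> = step_map3 n a b c k l"
  proof (rule PiE_ext[OF endo(1)])
    show "step_map3 n a b c k l \<in> chain n \<rightarrow>\<^sub>E chain n"
      using assms(2-4) by (auto simp: step_map3_def chain_def)
    fix x assume x: "x \<in> chain n"
    have "\<alpha> x < b \<longleftrightarrow> x < k" "\<alpha> x < c \<longleftrightarrow> x < l"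
      using x below_b below_c by blast+
    then show "\<alpha> x = step_map3 n a b c k l x"
      using x idem_triangleD(4)[OF \<alpha> x] assms(2,3) by (auto simp: step_map3_def)
  qed
  ultimately show thesis
    using that by auto
qed

lemma bij_betw_step_map3_idem_triangle:
  assumes "a < b" "b < c" "c < n"
  shows "bij_betw (\<lambda>(k, l). step_map3 n a b c k l) {(k, l). a < k \<and> k \<le> l \<and> l \<le> c}
           (idem_triangle n a b c)"
  unfolding bij_betw_def
proof
  show "inj_on (\<lambda>(k, l). step_map3 n a b c k l) {(k, l). a < k \<and> k \<le> l \<and> l \<le> c}"
    by (rule inj_on_subset[OF inj_on_step_map3[OF assms(1,2)]]) (use assms in auto)
  show "(\<lambda>(k, l). step_map3 n a b c k l) ` {(k, l). a < k \<and> k \<le> l \<and> l \<le> c}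
        = idem_triangle n a b c"
    using assms step_map3_in_idem_triangle[of a b c _ _ n]
    by (auto elim!: idem_triangle_obtains_step_map3)
qed

lemma bij_betw_Collect:
  assumes "bij_betw f A B"
  shows "bij_betw f {x \<in> A. P (f x)} {y \<in> B. P y}"
proof (rule bij_betw_subset[OF assms])
  have "B = f ` A"
    using assms by (simp add: bij_betw_def)
  then show "f ` {x \<in> A. P (f x)} = {y \<in> B. P y}"
    by (simp only: Compr_image_eq)
qed auto

lemma card_idem_triangle_Collect:
  assumes "a < b" "b < c" "c < n"
  shows "card {\<alpha> \<in> idem_triangle n a b c. P \<alpha>}
         = card {(k, l). a < k \<and> k \<le> l \<and> l \<le> c \<and> P (step_map3 n a b c k l)}"
proof -
  have "card {\<alpha> \<in> idem_triangle n a b c. P \<alpha>}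
        = card {p \<in> {(k, l). a < k \<and> k \<le> l \<and> l \<le> c}. P (case p of (k, l) \<Rightarrow> step_map3 n a b c k l)}"
    by (rule bij_betw_same_card[OF bij_betw_Collect[OF bij_betw_step_map3_idem_triangle[OF assms]], symmetric])
  also have "{p \<in> {(k, l). a < k \<and> k \<le> l \<and> l \<le> c}. P (case p of (k, l) \<Rightarrow> step_map3 n a b c k l)}
        = {(k, l). a < k \<and> k \<le> l \<and> l \<le> c \<and> P (step_map3 n a b c k l)}"
    by auto
  finally show ?thesis .
qed

lemma finite_increasing_pairs: "finite {(k, l). u < k \<and> k \<le> l \<and> l \<le> (v::nat)}"
proof (rule finite_subset)
  show "{(k, l). u < k \<and> k \<le> l \<and> l \<le> v} \<subseteq> {..v} \<times> {..v}"
    by auto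
qed simp

lemma card_increasing_pairs:
  "2 * card {(k, l). u < k \<and> k \<le> l \<and> l \<le> u + (d::nat)} = d * (d + 1)"
proof (induction d)
  case 0
  have "{(k, l). u < k \<and> k \<le> l \<and> l \<le> u} = {}"
    by auto
  then show ?case
    unfolding add_0_right by (simp only: card.empty)
next
  case (Suc d)
  let ?S = "\<lambda>d. {(k, l). u < k \<and> k \<le> l \<and> l \<le> u + d}"
  have split: "?S (Suc d) = ?S d \<union> (\<lambda>k. (k, u + Suc d)) ` {u<..u + Suc d}"
    by auto
  have "finite (?S d)"
    by (rule finite_increasing_pairs)
  moreover have "?S d \<inter> (\<lambda>k. (k, u + Suc d)) ` {u<..u + Suc d} = {}"
    by auto
  moreover have "card ((\<lambda>k. (k, u + Suc d)) ` {u<..u + Suc d}) = Suc d"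
    by (simp add: card_image inj_on_def)
  ultimately have "card (?S (Suc d)) = card (?S d) + Suc d"
    unfolding split by (simp add: card_Un_disjoint)
  then show ?case
    using Suc.IH by (simp add: algebra_simps)
qed

lemma card_idem_triangle_moving:
  assumes "a < b" "b < c" "c < n"
  shows "2 * card {\<alpha> \<in> idem_triangle n a b c. \<alpha> b \<noteq> b} = (c - b)^2 + (b - a)^2 + (c - a)"
proof -
  let ?S = "\<lambda>u d. {(k, l). u < k \<and> k \<le> l \<and> l \<le> u + d} :: (nat \<times> nat) set"
  have at_b: "step_map3 n a b c k l b \<noteq> b \<longleftrightarrow> l \<le> b \<or> b < k" for k l
    using assms by (auto simp: step_map3_def chain_def)
  \<comment> \<open>a map not fixing \<open>b\<close> has both of its jumps on the same side of \<open>b\<close>\<close>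
  have "{(k, l). a < k \<and> k \<le> l \<and> l \<le> c \<and> step_map3 n a b c k l b \<noteq> b}
        = ?S a (b - a) \<union> ?S b (c - b)"
    unfolding at_b using assms by auto
  moreover have "?S a (b - a) \<inter> ?S b (c - b) = {}"
    using assms by auto
  ultimately have card_moving: "card {\<alpha> \<in> idem_triangle n a b c. \<alpha> b \<noteq> b}
                   = card (?S a (b - a)) + card (?S b (c - b))"
    using card_idem_triangle_Collect[OF assms] finite_increasing_pairs by (simp add: card_Un_disjoint)
  have gap_sum: "(b - a) + (c - b) = c - a"
    using assms by simp
  have square_sums: "x * (x + 1) + y * (y + 1) = y\<^sup>2 + x\<^sup>2 + (x + y)" for x y :: nat
    by (simp add: power2_eq_square)
  have "2 * card {\<alpha> \<in> idem_triangle n a b c. \<alpha> b \<noteq> b}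
        = 2 * card (?S a (b - a)) + 2 * card (?S b (c - b))"
    using card_moving by simp
  also have "\<dots> = (b - a) * (b - a + 1) + (c - b) * (c - b + 1)"
    by (simp only: card_increasing_pairs)
  also have "\<dots> = (c - b)\<^sup>2 + (b - a)\<^sup>2 + ((b - a) + (c - b))"
    by (rule square_sums)
  also have "\<dots> = (c - b)\<^sup>2 + (b - a)\<^sup>2 + (c - a)"
    by (simp only: gap_sum)
  finally show ?thesis .
qed

lemma card_idem_triangle_fixing:
  assumes "a < b" "b < c" "c < n"
  shows "card {\<alpha> \<in> idem_triangle n a b c. \<alpha> b = b} = (b - a) * (c - b)"
proof -
  have "{(k, l). a < k \<and> k \<le> l \<and> l \<le> c \<and> step_map3 n a b c k l b = b}
        = {a<..b} \<times> {b<..c}"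
    using assms by (auto simp: step_map3_def chain_def)
  then show ?thesis
    using card_idem_triangle_Collect[OF assms] by simp
qed

lemma right_identities_triangle:
  assumes "a < n" "b < n" "c < n"
  shows "right_identities n (triangle n a b c) = {\<alpha> \<in> idem_triangle n a b c. \<alpha> b = b}"
proof (intro equalityI subsetI)
  fix e assume e: "e \<in> right_identities n (triangle n a b c)"
  have "e v = v" if "v \<in> {a, b, c}" for v
  proof -
    let ?const = "\<lambda>x\<in>chain n. v"
    have "?const \<in> triangle n a b c"
      using that assms by (auto simp: triangle_def endo_def chain_def intro!: mono_onI)
    then have "emult n ?const e 0 = ?const 0"
      using e by (simp add: right_identities_def)
    then show "e v = v"
      using assms by (simp add: chain_def)
  qed
  then show "e \<in> {\<alpha> \<in> idem_triangle n a b c. \<alpha> b = b}"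
    using e by (simp add: right_identities_def idem_triangle_def)
next
  fix e assume e: "e \<in> {\<alpha> \<in> idem_triangle n a b c. \<alpha> b = b}"
  have "emult n \<alpha> e = \<alpha>" if \<alpha>: "\<alpha> \<in> triangle n a b c" for \<alpha>
  proof (rule PiE_ext)
    show "emult n \<alpha> e \<in> chain n \<rightarrow>\<^sub>E chain n" "\<alpha> \<in> chain n \<rightarrow>\<^sub>E chain n"
      using emult_in_triangle[OF \<alpha> idem_triangleD(1)] \<alpha> e by (auto simp: triangle_def endo_def)
    fix x assume "x \<in> chain n"
    then show "emult n \<alpha> e x = \<alpha> x"
      using \<alpha> e idem_triangleD(2,3) by (auto simp: triangle_def)
  qed
  then show "e \<in> right_identities n (triangle n a b c)"
    using e by (simp add: right_identities_def idem_triangle_def)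
qed

lemma Id_STR_eq_idem_triangle_avoiding:
  assumes "a < b" "b < c" "c < n"
  shows "Id_STR n a c = {\<alpha> \<in> idem_triangle n a b c. b \<notin> \<alpha> ` chain n}"
proof (intro equalityI subsetI)
  fix \<alpha> assume "\<alpha> \<in> Id_STR n a c"
  then obtain k where "a < k" "k \<le> c" "\<alpha> = step_map3 n a b c k k"
    unfolding Id_STR_def step_map_eq_step_map3[of n a c _ b] by (auto simp: Suc_le_eq)
  then show "\<alpha> \<in> {\<alpha> \<in> idem_triangle n a b c. b \<notin> \<alpha> ` chain n}"
    using assms step_map3_in_idem_triangle[of a b c k k n] by (auto simp: step_map3_def)
next
  fix \<alpha> assume \<alpha>: "\<alpha> \<in> {\<alpha> \<in> idem_triangle n a b c. b \<notin> \<alpha> ` chain n}"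
  then obtain k l where kl: "a < k" "k \<le> l" "l \<le> c" "\<alpha> = step_map3 n a b c k l"
    using idem_triangle_obtains_step_map3[OF _ assms] by blast
  have "k = l"
  proof (rule ccontr)
    assume "k \<noteq> l"
    then have "\<alpha> k = b" "k \<in> chain n"
      using kl assms by (simp_all add: step_map3_def chain_def)
    then show False
      using \<alpha> by blast
  qed
  then show "\<alpha> \<in> Id_STR n a c"
    using kl by (auto simp: Id_STR_def step_map_eq_step_map3[of n a c _ b])
qed

lemma is_ideal_imp_is_subsemiring: "is_ideal n I R \<Longrightarrow> is_subsemiring n I R"
  by (auto simp: is_ideal_def is_subsemiring_def)

lemma subsemiring_idem_triangle_fixing:
  assumes "a < b" "b < c" "c < n"
  shows "is_subsemiring n {\<alpha> \<in> idem_triangle n a b c. \<alpha> b = b} (idem_triangle n a b c)"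
proof -
  have "step_map3 n a b c b c \<in> {\<alpha> \<in> idem_triangle n a b c. \<alpha> b = b}"
    using assms step_map3_in_idem_triangle[of a b c b c n] by (simp add: step_map3_def chain_def)
  moreover have "eplus n \<alpha> \<beta> \<in> {\<alpha> \<in> idem_triangle n a b c. \<alpha> b = b}"
    and "emult n \<alpha> \<beta> \<in> {\<alpha> \<in> idem_triangle n a b c. \<alpha> b = b}"
    if "\<alpha> \<in> idem_triangle n a b c" "\<alpha> b = b" "\<beta> \<in> idem_triangle n a b c" "\<beta> b = b" for \<alpha> \<beta>
    using that assms eplus_in_idem_triangle[of \<alpha> n a b c \<beta>] emult_in_idem_triangle[of \<alpha> n a b c \<beta>]
    by (simp_all add: chain_def)
  ultimately show ?thesis
    unfolding is_subsemiring_def by blast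
qed

lemma ideal_idem_triangle_moving:
  assumes "a < b" "b < c" "c < n"
  shows "is_ideal n {\<alpha> \<in> idem_triangle n a b c. \<alpha> b \<noteq> b} (idem_triangle n a b c)"
    (is "is_ideal n ?I ?T")
proof -
  have bounds: "a < n" "c < n" and b: "b \<in> chain n"
    using assms by (simp_all add: chain_def)
  have moving_iff: "\<alpha> \<in> ?I \<longleftrightarrow> \<alpha> b \<in> {a, c}" if "\<alpha> \<in> ?T" for \<alpha>
    using idem_triangleD(4)[OF that b] assms that by auto
  have "step_map3 n a b c c c \<in> ?I"
    using assms step_map3_in_idem_triangle[of a b c c c n] by (simp add: step_map3_def chain_def)
  moreover have "eplus n \<alpha> \<beta> \<in> ?I" if "\<alpha> \<in> ?I" "\<beta> \<in> ?I" for \<alpha> \<beta>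
  proof -
    have "eplus n \<alpha> \<beta> \<in> ?T"
      using that bounds eplus_in_idem_triangle by blast
    then show ?thesis
      using that moving_iff b by (auto simp: max_def)
  qed
  moreover have "emult n \<rho> \<alpha> \<in> ?I \<and> emult n \<alpha> \<rho> \<in> ?I" if \<rho>: "\<rho> \<in> ?T" and \<alpha>: "\<alpha> \<in> ?I" for \<rho> \<alpha>
  proof -
    have \<alpha>T: "\<alpha> \<in> ?T" and \<alpha>b: "\<alpha> b \<in> {a, c}"
      using \<alpha> moving_iff by auto
    have "\<alpha> (\<rho> b) \<in> {a, c}"
      using idem_triangleD(4)[OF \<rho> b]
      by (elim insertE emptyE) (use \<alpha>b idem_triangleD(2,3)[OF \<alpha>T] in simp_all)
    moreover have "\<rho> (\<alpha> b) \<in> {a, c}"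
      using \<alpha>b by (elim insertE emptyE) (simp_all add: idem_triangleD(2,3)[OF \<rho>])
    moreover have "emult n \<rho> \<alpha> \<in> ?T" "emult n \<alpha> \<rho> \<in> ?T"
      using \<rho> \<alpha>T bounds emult_in_idem_triangle by auto
    ultimately show ?thesis
      using b assms by auto
  qed
  ultimately show ?thesis
    unfolding is_ideal_def by blast
qed

lemma ideal_idem_triangle_avoiding:
  assumes "a < b" "b < c" "c < n"
  shows "is_ideal n {\<alpha> \<in> idem_triangle n a b c. b \<notin> \<alpha> ` chain n} (idem_triangle n a b c)"
    (is "is_ideal n ?I ?T")
proof -
  have bounds: "a < n" "c < n"
    using assms by simp_all
  have avoiding_iff: "\<alpha> \<in> ?I \<longleftrightarrow> (\<forall>x\<in>chain n. \<alpha> x \<in> {a, c})" if "\<alpha> \<in> ?T" for \<alpha>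
    using idem_triangleD(4)[OF that] assms that by auto
  have "step_map3 n a b c c c \<in> ?I"
    using assms step_map3_in_idem_triangle[of a b c c c n] by (auto simp: step_map3_def)
  moreover have "eplus n \<alpha> \<beta> \<in> ?I" if "\<alpha> \<in> ?I" "\<beta> \<in> ?I" for \<alpha> \<beta>
  proof -
    have "eplus n \<alpha> \<beta> \<in> ?T"
      using that bounds eplus_in_idem_triangle by blast
    then show ?thesis
      using that avoiding_iff by (auto simp: max_def)
  qed
  moreover have "emult n \<rho> \<alpha> \<in> ?I \<and> emult n \<alpha> \<rho> \<in> ?I" if \<rho>: "\<rho> \<in> ?T" and \<alpha>: "\<alpha> \<in> ?I" for \<rho> \<alpha>
  proof -
    have \<alpha>T: "\<alpha> \<in> ?T" and \<alpha>x: "\<And>x. x \<in> chain n \<Longrightarrow> \<alpha> x \<in> {a, c}"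
      using \<alpha> avoiding_iff by auto
    have "\<alpha> (\<rho> x) \<in> {a, c}" if "x \<in> chain n" for x
    proof (rule \<alpha>x)
      show "\<rho> x \<in> chain n"
        using idem_triangleD(1)[OF \<rho>] that by (auto simp: triangle_def dest: endoD(1))
    qed
    moreover have "\<rho> (\<alpha> x) \<in> {a, c}" if "x \<in> chain n" for x
      using \<alpha>x[OF that] by (elim insertE emptyE) (simp_all add: idem_triangleD(2,3)[OF \<rho>])
    moreover have "emult n \<rho> \<alpha> \<in> ?T" "emult n \<alpha> \<rho> \<in> ?T"
      using \<rho> \<alpha>T bounds emult_in_idem_triangle by auto
    ultimately show ?thesis
      using assms by auto
  qed
  ultimately show ?thesis
    unfolding is_ideal_def by blast
qed

theorem theorem33:
  fixes n a b c :: nat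
  assumes "n \<ge> 3" and "a < b" and "b < c" and "c < n"
  defines "IT \<equiv> idem_triangle n a b c"
      and "RI \<equiv> right_identities n (triangle n a b c)"
  shows "(is_subsemiring n RI IT \<and> card RI = (b - a) * (c - b)) \<and>
         (is_subsemiring n (IT - RI) IT \<and>
          2 * card (IT - RI) = (c - b)^2 + (b - a)^2 + (c - a)) \<and>
         (is_ideal n (Id_STR n a c) IT \<and> is_ideal n (IT - RI) IT)"
proof -
  have RI: "RI = {\<alpha> \<in> IT. \<alpha> b = b}"
    unfolding RI_def IT_def using assms(2-4) by (simp add: right_identities_triangle)
  then have moving: "IT - RI = {\<alpha> \<in> IT. \<alpha> b \<noteq> b}"
    by blast
  have "is_ideal n {\<alpha> \<in> IT. \<alpha> b \<noteq> b} IT"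
    unfolding IT_def using assms(2-4) by (rule ideal_idem_triangle_moving)
  moreover have "is_ideal n (Id_STR n a c) IT"
    unfolding IT_def Id_STR_eq_idem_triangle_avoiding[OF assms(2-4)]
    using assms(2-4) by (rule ideal_idem_triangle_avoiding)
  moreover have "is_subsemiring n RI IT"
    unfolding RI IT_def using assms(2-4) by (rule subsemiring_idem_triangle_fixing)
  moreover have "card RI = (b - a) * (c - b)"
    unfolding RI IT_def using assms(2-4) by (rule card_idem_triangle_fixing)
  moreover have "2 * card {\<alpha> \<in> IT. \<alpha> b \<noteq> b} = (c - b)^2 + (b - a)^2 + (c - a)"
    unfolding IT_def using assms(2-4) by (rule card_idem_triangle_moving)
  ultimately show ?thesis
    unfolding moving using is_ideal_imp_is_subsemiring by blast
qed

end
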